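(* Let $\mathbf{x}$ be a random vector in $\mathbb{R}^k$ with (differentiable) pdf $p_{\mathbf{x}}$ and score function $\boldsymbol{\Psi}_{\mathbf{x}}=\nabla\log p_{\mathbf{x}}$, and let $\tilde{\mathbf{x}}=\mathbf{x}+\mathbf{n}$ where $\mathbf{n}$ is Gaussian with mean zero and covariance $\boldsymbol{\Sigma}_{\mathbf{n}}$, independent of $\mathbf{x}$; let $\boldsymbol{\Psi}_{\tilde{\mathbf{x}}}=\nabla\log p_{\tilde{\mathbf{x}}}$ be the score function of $\tilde{\mathbf{x}}$. If $\sup_{\boldsymbol{\alpha}}\|\boldsymbol{\Psi}_{\mathbf{x}}(\boldsymbol{\alpha})\|\le C$, then $\sup_{\boldsymbol{\alpha}}\|\boldsymbol{\Psi}_{\tilde{\mathbf{x}}}(\boldsymbol{\alpha})\|\le C$. *)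

theory Defs
  imports "HOL-Probability.Probability"
begin

definition score :: "(real^'k \<Rightarrow> real) \<Rightarrow> real^'k \<Rightarrow> real^'k" where
  "score f \<alpha> = (\<chi> i. frechet_derivative (\<lambda>y. ln (f y)) (at \<alpha>) (axis i 1))"

definition std_gaussian_vec :: "(real^'k) measure" where
  "std_gaussian_vec = density lborel (\<lambda>z. ennreal (\<Prod>i\<in>UNIV. std_normal_density (z $ i)))"

text \<open>N is a (possibly degenerate) Gaussian random vector with mean zero and
  covariance Cov: N has the law of A z with z standard Gaussian and A A^T = Cov.\<close>
definition gaussian_vec :: "'a measure \<Rightarrow> ('a \<Rightarrow> real^'k) \<Rightarrow> real^'k^'k \<Rightarrow> bool" where
  "gaussian_vec M N Cov \<longleftrightarrow> N \<in> borel_measurable M \<and>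
     (\<exists>A :: real^'k^'k. A ** transpose A = Cov \<and>
        distr M borel N = distr std_gaussian_vec borel (\<lambda>z. A *v z))"

end

theory Submission imports Defs begin

text \<open>The density of \<open>X + N\<close> is the mixture \<open>q y = E p (y - N)\<close> of translates of \<open>p\<close>; only
  the independence of the noise matters, not its Gaussianity. The score bound makes \<open>ln p\<close>
  \<open>C\<close>-Lipschitz, so \<open>p a \<le> exp (C \<parallel>a - b\<parallel>) p b\<close>. This comparison shows that \<open>q\<close> is finite
  everywhere (if it were infinite at one point it would be infinite everywhere, contradicting
  total mass 1) and supplies the integrable dominating function needed to differentiate under
  the integral: \<open>\<nabla>q y = E (p (y - N) \<Psi>\<^sub>p (y - N))\<close>. Hence \<open>\<Psi>\<^sub>q y\<close> is an average of values of
  \<open>\<Psi>\<^sub>p\<close> with respect to the weights \<open>p (y - N)\<close>, and its norm is at most \<open>C\<close>.\<close>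

lemma linear_eq_inner_axis:
  fixes L :: "real^'k \<Rightarrow> real"
  assumes "linear L"
  shows "L u = (\<chi> i. L (axis i 1)) \<bullet> u"
proof -
  have "L u = L (\<Sum>i\<in>UNIV. (u$i) *s axis i 1)" by (simp add: basis_expansion)
  also have "\<dots> = (\<Sum>i\<in>UNIV. u$i * L (axis i 1))"
    using assms by (simp add: linear_sum linear_scale scalar_mult_eq_scaleR)
  also have "\<dots> = (\<chi> i. L (axis i 1)) \<bullet> u"
    by (simp add: inner_vec_def mult.commute)
  finally show ?thesis .
qed

lemma has_derivative_ln_eq_inner_score:
  fixes f :: "real^'k \<Rightarrow> real"
  assumes "((\<lambda>y. ln (f y)) has_derivative D) (at x)"
  shows "D h = score f x \<bullet> h"
proof -
  have "frechet_derivative (\<lambda>y. ln (f y)) (at x) = D"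
    using frechet_derivative_at[OF assms] by simp
  moreover have "linear D" using assms by (rule has_derivative_linear)
  ultimately show ?thesis using linear_eq_inner_axis[of D h] by (simp add: score_def)
qed

lemma norm_score_le:
  fixes f :: "real^'k \<Rightarrow> real"
  assumes "(f has_derivative D) (at x)" and "f x > 0" and "C \<ge> 0"
    and "\<And>h. \<bar>D h\<bar> \<le> C * norm h * f x"
  shows "norm (score f x) \<le> C"
proof -
  let ?s = "score f x"
  have "((\<lambda>y. ln (f y)) has_derivative (\<lambda>h. D h / f x)) (at x)"
    using DERIV_compose_FDERIV[OF DERIV_ln[OF assms(2)] assms(1)]
    by (simp add: divide_inverse mult.commute)
  then have "?s \<bullet> ?s = D ?s / f x" by (rule has_derivative_ln_eq_inner_score[symmetric])
  also have "\<dots> \<le> C * norm ?s"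
    using assms(2) assms(4)[of ?s] by (simp add: divide_le_eq abs_le_iff)
  finally have "norm ?s * norm ?s \<le> C * norm ?s"
    by (simp add: power2_norm_eq_inner[symmetric] power2_eq_square)
  then show ?thesis using assms(3) by (cases "?s = 0") (auto simp: mult_le_cancel_right)
qed

lemma (in prob_space) distributed_add_indep:
  fixes X Y :: "'a \<Rightarrow> 'b::ordered_euclidean_space"
  assumes indep: "indep_var borel X borel Y"
    and X: "distributed M lborel X f"
    and Y[measurable]: "Y \<in> borel_measurable M"
  shows "distributed M lborel (\<lambda>\<omega>. X \<omega> + Y \<omega>) (\<lambda>y. \<integral>\<^sup>+w. f (y - w) \<partial>distr M borel Y)"
proof -
  define \<nu> where "\<nu> = distr M borel Y"
  have [measurable]: "f \<in> borel_measurable borel" "X \<in> borel_measurable M"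
    using distributed_borel_measurable[OF X] distributed_measurable[OF X] by simp_all
  have sets_\<nu>[measurable_cong]: "sets \<nu> = sets borel" by (simp add: \<nu>_def)
  interpret \<nu>: prob_space \<nu> unfolding \<nu>_def by (rule prob_space_distr) simp
  interpret pair_sigma_finite lborel \<nu> ..
  have "distr M borel (\<lambda>\<omega>. X \<omega> + Y \<omega>) = (distr M borel X \<star> \<nu>)"
    unfolding \<nu>_def by (rule sum_indep_random_variable[OF indep]) simp_all
  also have "\<dots> = (density lborel f \<star> \<nu>)"
    using distributed_distr_eq_density[OF X] by (simp cong: distr_cong)
  also have "\<dots> = density lborel (\<lambda>y. \<integral>\<^sup>+w. f (y - w) \<partial>\<nu>)"
  proof (rule measure_eqI)
    fix A assume "A \<in> sets (density lborel f \<star> \<nu>)"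
    then have [measurable]: "A \<in> sets borel" by simp
    have "emeasure (density lborel f \<star> \<nu>) A =
        (\<integral>\<^sup>+x. \<integral>\<^sup>+w. indicator A (x + w) \<partial>\<nu> \<partial>density lborel f)"
      using distributed_finite_measure_density[OF X]
      by (intro convolution_emeasure') (simp_all add: \<nu>.finite_measure_axioms sets_\<nu>)
    also have "\<dots> = (\<integral>\<^sup>+x. \<integral>\<^sup>+w. f x * indicator A (x + w) \<partial>\<nu> \<partial>lborel)"
      by (simp add: nn_integral_density nn_integral_cmult)
    also have "\<dots> = (\<integral>\<^sup>+w. \<integral>\<^sup>+x. f x * indicator A (x + w) \<partial>lborel \<partial>\<nu>)"
      by (rule Fubini'[symmetric]) measurable
    also have "\<dots> = (\<integral>\<^sup>+w. \<integral>\<^sup>+y. f (y - w) * indicator A y \<partial>lborel \<partial>\<nu>)"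
    proof (rule nn_integral_cong)
      fix w :: 'b
      have "(\<integral>\<^sup>+y. f (y - w) * indicator A y \<partial>lborel) =
          (\<integral>\<^sup>+y. f (y - w) * indicator A y \<partial>distr lborel borel ((+) w))"
        by (simp add: lborel_distr_plus)
      also have "\<dots> = (\<integral>\<^sup>+x. f x * indicator A (x + w) \<partial>lborel)"
        by (subst nn_integral_distr) (simp_all add: add.commute)
      finally show "(\<integral>\<^sup>+x. f x * indicator A (x + w) \<partial>lborel) =
          (\<integral>\<^sup>+y. f (y - w) * indicator A y \<partial>lborel)" by simp
    qed
    also have "\<dots> = (\<integral>\<^sup>+y. \<integral>\<^sup>+w. f (y - w) * indicator A y \<partial>\<nu> \<partial>lborel)"
      by (rule Fubini') measurable
    also have "\<dots> = emeasure (density lborel (\<lambda>y. \<integral>\<^sup>+w. f (y - w) \<partial>\<nu>)) A"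
      by (simp add: emeasure_density nn_integral_multc)
    finally show "emeasure (density lborel f \<star> \<nu>) A =
        emeasure (density lborel (\<lambda>y. \<integral>\<^sup>+w. f (y - w) \<partial>\<nu>)) A" .
  qed simp
  finally show ?thesis
    unfolding distributed_def \<nu>_def[symmetric] by (simp cong: distr_cong)
qed

lemma integral_dominated_convergence_at:
  fixes s :: "'c::first_countable_topology \<Rightarrow> 'a \<Rightarrow> 'b::{banach, second_countable_topology}"
  assumes "f \<in> borel_measurable M" "\<And>t. s t \<in> borel_measurable M" "integrable M w"
    and lim: "AE x in M. ((\<lambda>t. s t x) \<longlongrightarrow> f x) (at t\<^sub>0)"
    and bound: "\<forall>\<^sub>F t in at t\<^sub>0. AE x in M. norm (s t x) \<le> w x"
  shows "((\<lambda>t. integral\<^sup>L M (s t)) \<longlongrightarrow> integral\<^sup>L M f) (at t\<^sub>0)"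
proof (subst tendsto_at_iff_sequentially, intro allI impI)
  fix X :: "nat \<Rightarrow> 'c"
  assume "\<forall>i. X i \<in> UNIV - {t\<^sub>0}" and "X \<longlonglongrightarrow> t\<^sub>0"
  then have X: "filterlim X (at t\<^sub>0) sequentially"
    unfolding filterlim_at by (auto intro: always_eventually)
  from filterlim_iff[THEN iffD1, OF this, rule_format, OF bound]
  obtain N where w: "\<And>n. N \<le> n \<Longrightarrow> AE x in M. norm (s (X n) x) \<le> w x"
    by (auto simp: eventually_sequentially)
  show "((\<lambda>t. integral\<^sup>L M (s t)) \<circ> X) \<longlonglongrightarrow> integral\<^sup>L M f"
    unfolding comp_def
  proof (rule LIMSEQ_offset, rule integral_dominated_convergence)
    show "AE x in M. norm (s (X (n + N)) x) \<le> w x" for n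
      by (rule w) auto
    show "AE x in M. (\<lambda>n. s (X (n + N)) x) \<longlonglongrightarrow> f x"
      using lim
    proof eventually_elim
      fix x assume "((\<lambda>t. s t x) \<longlongrightarrow> f x) (at t\<^sub>0)"
      then show "(\<lambda>n. s (X (n + N)) x) \<longlonglongrightarrow> f x"
        by (intro LIMSEQ_ignore_initial_segment filterlim_compose[OF _ X])
    qed
  qed (use assms in auto)
qed

locale log_lipschitz_density =
  fixes p :: "real^'k \<Rightarrow> real" and C :: real
  assumes density_pos: "\<And>x. p x > 0"
    and density_differentiable: "\<And>x. p differentiable (at x)"
    and score_bounded: "\<And>x. norm (score p x) \<le> C"
begin

definition dlog :: "real^'k \<Rightarrow> real^'k \<Rightarrow> real" where
  "dlog x = frechet_derivative (\<lambda>y. ln (p y)) (at x)"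

lemma has_derivative_ln_density: "((\<lambda>y. ln (p y)) has_derivative dlog x) (at x)"
proof -
  obtain D where "(p has_derivative D) (at x)"
    using density_differentiable[of x] by (auto simp: differentiable_def)
  then have "((\<lambda>y. ln (p y)) has_derivative (\<lambda>h. inverse (p x) * D h)) (at x)"
    using density_pos[of x] by (auto intro!: derivative_eq_intros)
  then show ?thesis
    unfolding dlog_def using frechet_derivative_works by (auto simp: differentiable_def)
qed

lemma linear_dlog: "linear (dlog x)"
  using has_derivative_ln_density by (rule has_derivative_linear)

lemma abs_dlog_le: "\<bar>dlog x h\<bar> \<le> C * norm h"
proof -
  have "\<bar>dlog x h\<bar> \<le> norm (score p x) * norm h"
    unfolding has_derivative_ln_eq_inner_score[OF has_derivative_ln_density]
    by (rule Cauchy_Schwarz_ineq2)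
  also have "\<dots> \<le> C * norm h" using score_bounded[of x] by (simp add: mult_right_mono)
  finally show ?thesis .
qed

lemma C_nonneg: "C \<ge> 0"
  using score_bounded[of 0] norm_ge_zero order_trans by blast

lemma abs_weighted_dlog_le: "\<bar>p x * dlog x h\<bar> \<le> C * norm h * p x"
  using abs_dlog_le[of x h] density_pos[of x] by (simp add: abs_mult ac_simps)

lemma has_derivative_density: "(p has_derivative (\<lambda>h. p x * dlog x h)) (at x)"
proof -
  have "((\<lambda>y. exp (ln (p y))) has_derivative (\<lambda>h. exp (ln (p x)) * dlog x h)) (at x)"
    using DERIV_compose_FDERIV[OF DERIV_exp has_derivative_ln_density] by (simp add: mult.commute)
  then show ?thesis using density_pos by simp
qed

lemma abs_ln_density_diff_le: "\<bar>ln (p a) - ln (p b)\<bar> \<le> C * norm (a - b)"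
proof -
  have "onorm (dlog x) \<le> C" for x by (rule onorm_le) (simp add: abs_dlog_le)
  then show ?thesis
    using differentiable_bound[of UNIV "\<lambda>y. ln (p y)" dlog C a b] has_derivative_ln_density by auto
qed

lemma density_le_exp_mult: "p a \<le> exp (C * norm (a - b)) * p b"
proof -
  have "ln (p a) \<le> C * norm (a - b) + ln (p b)" using abs_ln_density_diff_le[of a b] by linarith
  then have "exp (ln (p a)) \<le> exp (C * norm (a - b) + ln (p b))" by simp
  then show ?thesis using density_pos[of a] density_pos[of b] by (simp add: exp_add)
qed

lemma abs_density_diff_le:
  assumes "a \<in> cball c r" "b \<in> cball c r"
  shows "\<bar>p a - p b\<bar> \<le> C * exp (C * r) * p c * norm (a - b)"
proof -
  have "norm (p a - p b) \<le> (C * exp (C * r) * p c) * norm (a - b)"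
  proof (rule differentiable_bound[of "cball c r" p "\<lambda>x h. p x * dlog x h"])
    show "(p has_derivative (\<lambda>h. p x * dlog x h)) (at x within cball c r)" for x
      using has_derivative_density by (rule has_derivative_at_withinI)
    show "onorm (\<lambda>h. p x * dlog x h) \<le> C * exp (C * r) * p c" if "x \<in> cball c r" for x
    proof (rule onorm_le)
      fix h :: "real^'k"
      have "p x \<le> exp (C * norm (x - c)) * p c" by (rule density_le_exp_mult)
      also have "\<dots> \<le> exp (C * r) * p c"
        using that C_nonneg density_pos[of c]
        by (auto simp: dist_norm norm_minus_commute intro!: mult_right_mono mult_left_mono)
      finally have "C * norm h * p x \<le> C * norm h * (exp (C * r) * p c)"
        using C_nonneg by (intro mult_left_mono) auto
      then show "norm (p x * dlog x h) \<le> C * exp (C * r) * p c * norm h"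
        using abs_weighted_dlog_le[of x h] by (simp add: ac_simps)
    qed
  qed (use assms in auto)
  then show ?thesis by simp
qed

lemma borel_measurable_density[measurable]: "p \<in> borel_measurable borel"
  using density_differentiable
  by (intro borel_measurable_continuous_onI continuous_at_imp_continuous_on ballI
      differentiable_imp_continuous_within)

lemma tendsto_ln_density_quotient: "((\<lambda>t. (ln (p (x + t *\<^sub>R h)) - ln (p x)) / t) \<longlongrightarrow> dlog x h) (at 0)"
proof -
  have "((\<lambda>t. x + t *\<^sub>R h) has_derivative (\<lambda>t. t *\<^sub>R h)) (at 0)"
    by (auto intro!: derivative_eq_intros)
  from has_derivative_compose[OF this has_derivative_ln_density]
  have "((\<lambda>t. ln (p (x + t *\<^sub>R h))) has_derivative (\<lambda>t. dlog x h * t)) (at 0)"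
    using linear_dlog[of x] by (simp add: linear_scale mult.commute)
  then have "((\<lambda>t. ln (p (x + t *\<^sub>R h))) has_real_derivative dlog x h) (at 0)"
    by (simp add: has_field_derivative_def)
  then show ?thesis by (simp add: DERIV_def)
qed

lemma borel_measurable_dlog[measurable]: "(\<lambda>x. dlog x h) \<in> borel_measurable borel"
proof (rule borel_measurable_LIMSEQ_real)
  have "filterlim (\<lambda>n. inverse (real (Suc n))) (at 0) sequentially"
    unfolding filterlim_at using LIMSEQ_inverse_real_of_nat by auto
  from filterlim_compose[OF tendsto_ln_density_quotient this]
  show "(\<lambda>n. (ln (p (x + inverse (real (Suc n)) *\<^sub>R h)) - ln (p x)) / inverse (real (Suc n)))
      \<longlonglongrightarrow> dlog x h" for x
    by simp
qed measurable


lemma nn_integral_translate_le: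
  fixes \<nu> :: "(real^'k) measure"
  assumes [measurable_cong]: "sets \<nu> = sets borel"
  shows "(\<integral>\<^sup>+w. ennreal (p (a - w)) \<partial>\<nu>) \<le>
    ennreal (exp (C * norm (a - b))) * (\<integral>\<^sup>+w. ennreal (p (b - w)) \<partial>\<nu>)"
proof -
  have "(\<integral>\<^sup>+w. ennreal (p (a - w)) \<partial>\<nu>) \<le>
      (\<integral>\<^sup>+w. ennreal (exp (C * norm (a - b))) * ennreal (p (b - w)) \<partial>\<nu>)"
  proof (rule nn_integral_mono)
    fix w
    have "p (a - w) \<le> exp (C * norm ((a - w) - (b - w))) * p (b - w)"
      by (rule density_le_exp_mult)
    then show "ennreal (p (a - w)) \<le> ennreal (exp (C * norm (a - b))) * ennreal (p (b - w))"
      using density_pos by (simp add: ennreal_mult[symmetric] less_imp_le)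
  qed
  also have "\<dots> = ennreal (exp (C * norm (a - b))) * (\<integral>\<^sup>+w. ennreal (p (b - w)) \<partial>\<nu>)"
    by (rule nn_integral_cmult) measurable
  finally show ?thesis .
qed

lemma nn_integral_translate_finite:
  fixes \<nu> :: "(real^'k) measure"
  assumes "sets \<nu> = sets borel"
    and total: "(\<integral>\<^sup>+y. (\<integral>\<^sup>+w. ennreal (p (y - w)) \<partial>\<nu>) \<partial>lborel) \<noteq> \<infinity>"
  shows "(\<integral>\<^sup>+w. ennreal (p (y - w)) \<partial>\<nu>) < \<infinity>"
proof (rule ccontr)
  assume "\<not> ?thesis"
  then have "(\<integral>\<^sup>+w. ennreal (p (y - w)) \<partial>\<nu>) = \<infinity>" by (simp add: less_top[symmetric])
  then have "(\<integral>\<^sup>+w. ennreal (p (z - w)) \<partial>\<nu>) = \<infinity>" for z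
    using nn_integral_translate_le[OF assms(1), of y z]
    by (simp add: top_unique ennreal_mult_eq_top_iff)
  then have "(\<integral>\<^sup>+y. (\<integral>\<^sup>+w. ennreal (p (y - w)) \<partial>\<nu>) \<partial>lborel) = (\<integral>\<^sup>+(y::real^'k). \<infinity> \<partial>lborel)"
    by (intro nn_integral_cong) simp
  also have "\<dots> = \<infinity>" by (simp add: nn_integral_const)
  finally show False using total by simp
qed

end

locale log_lipschitz_mixture = log_lipschitz_density p C for p :: "real^'k \<Rightarrow> real" and C +
  fixes \<nu> :: "(real^'k) measure"
  assumes prob_space_\<nu>: "prob_space \<nu>" and sets_\<nu>: "sets \<nu> = sets borel"
    and integrable_translate: "\<And>y. integrable \<nu> (\<lambda>w. p (y - w))"
begin

declare sets_\<nu>[measurable_cong]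

definition mixture :: "real^'k \<Rightarrow> real" where
  "mixture y = (\<integral>w. p (y - w) \<partial>\<nu>)"

definition mixture_deriv :: "real^'k \<Rightarrow> real^'k \<Rightarrow> real" where
  "mixture_deriv y h = (\<integral>w. p (y - w) * dlog (y - w) h \<partial>\<nu>)"

lemma integrable_weighted_dlog: "integrable \<nu> (\<lambda>w. p (y - w) * dlog (y - w) h)"
proof (rule Bochner_Integration.integrable_bound)
  show "integrable \<nu> (\<lambda>w. C * norm h * p (y - w))" using integrable_translate by simp
  show "AE w in \<nu>. norm (p (y - w) * dlog (y - w) h) \<le> norm (C * norm h * p (y - w))"
    using abs_weighted_dlog_le C_nonneg density_pos by (intro AE_I2) (simp add: abs_mult abs_of_pos)
qed measurable

lemma mixture_pos: "mixture y > 0"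
proof -
  interpret prob_space \<nu> by (rule prob_space_\<nu>)
  have "mixture y \<ge> 0" unfolding mixture_def using density_pos by (simp add: less_imp_le)
  moreover have "mixture y \<noteq> 0"
  proof
    assume "mixture y = 0"
    then have "AE w in \<nu>. p (y - w) = 0"
      using integral_nonneg_eq_0_iff_AE[of \<nu> "\<lambda>w. p (y - w)"] integrable_translate density_pos
      unfolding mixture_def by (simp add: less_imp_le)
    then have "AE w in \<nu>. False" by (rule AE_mp) (use density_pos in \<open>auto simp: less_le\<close>)
    then show False by simp
  qed
  ultimately show ?thesis by simp
qed

lemma abs_mixture_deriv_le: "\<bar>mixture_deriv y h\<bar> \<le> C * norm h * mixture y"
proof -
  have "\<bar>mixture_deriv y h\<bar> \<le> (\<integral>w. C * norm h * p (y - w) \<partial>\<nu>)"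
    unfolding mixture_deriv_def
    using integrable_weighted_dlog integrable_translate abs_weighted_dlog_le
    by (intro integral_abs_bound_integral) auto
  also have "\<dots> = C * norm h * mixture y" unfolding mixture_def by simp
  finally show ?thesis .
qed

lemma bounded_linear_mixture_deriv: "bounded_linear (mixture_deriv y)"
proof (rule bounded_linear_intro[where K="C * mixture y"])
  show "mixture_deriv y (a + b) = mixture_deriv y a + mixture_deriv y b" for a b
    unfolding mixture_deriv_def using linear_dlog[of "y - _"] integrable_weighted_dlog
    by (simp add: linear_add distrib_left)
  show "mixture_deriv y (r *\<^sub>R a) = r *\<^sub>R mixture_deriv y a" for r a
    unfolding mixture_deriv_def using linear_dlog[of "y - _"]
    by (simp add: linear_scale ac_simps)
  show "norm (mixture_deriv y a) \<le> norm a * (C * mixture y)" for a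
    using abs_mixture_deriv_le[of y a] by (simp add: ac_simps)
qed

definition remainder :: "real^'k \<Rightarrow> real^'k \<Rightarrow> real^'k \<Rightarrow> real" where
  "remainder y h w = p (y + h - w) - p (y - w) - p (y - w) * dlog (y - w) h"

lemma integrable_remainder: "integrable \<nu> (remainder y h)"
  unfolding remainder_def
  using integrable_translate[of "y + h"] integrable_translate[of y] integrable_weighted_dlog[of y h]
  by (intro Bochner_Integration.integrable_diff) auto

lemma integral_remainder: "mixture (y + h) - mixture y - mixture_deriv y h = (\<integral>w. remainder y h w \<partial>\<nu>)"
  unfolding remainder_def mixture_def mixture_deriv_def
  using integrable_translate[of "y + h"] integrable_translate[of y] integrable_weighted_dlog[of y h]
  by simp

lemma abs_remainder_le:
  assumes "norm h \<le> 1"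
  shows "\<bar>remainder y h w\<bar> \<le> (C * exp C + C) * p (y - w) * norm h"
proof -
  have "\<bar>p (y + h - w) - p (y - w)\<bar> \<le> C * exp (C * 1) * p (y - w) * norm ((y + h - w) - (y - w))"
    by (rule abs_density_diff_le) (use assms in \<open>auto simp: dist_norm\<close>)
  then show ?thesis
    unfolding remainder_def using abs_weighted_dlog_le[of "y - w" h] by (simp add: algebra_simps)
qed

lemma tendsto_remainder: "((\<lambda>h. \<bar>remainder y h w\<bar> / norm h) \<longlongrightarrow> 0) (at 0)"
  using has_derivative_density[of "y - w"]
  unfolding has_derivative_at remainder_def by (simp add: diff_add_eq)

lemma has_derivative_mixture: "(mixture has_derivative mixture_deriv y) (at y)"
proof -
  have "((\<lambda>h. \<integral>w. \<bar>remainder y h w\<bar> / norm h \<partial>\<nu>) \<longlongrightarrow> (\<integral>w. 0 \<partial>\<nu>)) (at 0)"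
  proof (rule integral_dominated_convergence_at[where w="\<lambda>w. (C * exp C + C) * p (y - w)"])
    show "integrable \<nu> (\<lambda>w. (C * exp C + C) * p (y - w))" using integrable_translate by simp
    show "AE w in \<nu>. ((\<lambda>h. \<bar>remainder y h w\<bar> / norm h) \<longlongrightarrow> 0) (at 0)"
      using tendsto_remainder by simp
    have "\<forall>\<^sub>F h in at 0. h \<noteq> 0 \<and> norm h \<le> 1"
      unfolding eventually_at by (auto intro!: exI[of _ 1])
    then show "\<forall>\<^sub>F h in at 0. AE w in \<nu>. norm (\<bar>remainder y h w\<bar> / norm h) \<le> (C * exp C + C) * p (y - w)"
      by eventually_elim (auto intro!: AE_I2 simp: divide_le_eq abs_remainder_le)
  qed (simp_all add: remainder_def)
  then have lim: "((\<lambda>h. \<integral>w. \<bar>remainder y h w\<bar> / norm h \<partial>\<nu>) \<longlongrightarrow> 0) (at 0)" by simp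
  have "norm (mixture (y + h) - mixture y - mixture_deriv y h) / norm h
      \<le> (\<integral>w. \<bar>remainder y h w\<bar> / norm h \<partial>\<nu>)" for h
  proof -
    have "norm (mixture (y + h) - mixture y - mixture_deriv y h) \<le> (\<integral>w. \<bar>remainder y h w\<bar> \<partial>\<nu>)"
      unfolding integral_remainder real_norm_def
      using integrable_remainder by (intro integral_abs_bound_integral) auto
    then show ?thesis by (simp add: divide_right_mono)
  qed
  then show ?thesis
    unfolding has_derivative_at
    by (intro conjI bounded_linear_mixture_deriv tendsto_sandwich[OF _ _ tendsto_const lim])
      (simp_all add: always_eventually)
qed

lemma log_lipschitz_density_mixture: "log_lipschitz_density mixture C"
proof
  show "mixture y > 0" for y by (rule mixture_pos)
  show "mixture differentiable (at y)" for y
    using has_derivative_mixture by (auto simp: differentiable_def)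
  show "norm (score mixture y) \<le> C" for y
    by (rule norm_score_le[OF has_derivative_mixture mixture_pos C_nonneg abs_mixture_deriv_le])
qed

lemma nn_integral_translate_eq_mixture:
  "(\<integral>\<^sup>+w. ennreal (p (y - w)) \<partial>\<nu>) = ennreal (mixture y)"
  unfolding mixture_def
  using integrable_translate density_pos by (intro nn_integral_eq_integral) (auto simp: less_imp_le)

end

lemma (in log_lipschitz_density) distributed_add_indep_log_lipschitz:
  assumes "prob_space M" and X: "distributed M lborel X (\<lambda>x. ennreal (p x))"
    and N: "N \<in> borel_measurable M" and indep: "prob_space.indep_var M borel X borel N"
  shows "\<exists>q. distributed M lborel (\<lambda>\<omega>. X \<omega> + N \<omega>) (\<lambda>y. ennreal (q y)) \<and> log_lipschitz_density q C"
proof -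
  interpret M: prob_space M by fact
  define \<nu> where "\<nu> = distr M borel N"
  have sets_\<nu>[measurable_cong]: "sets \<nu> = sets borel" by (simp add: \<nu>_def)
  have sum: "distributed M lborel (\<lambda>\<omega>. X \<omega> + N \<omega>) (\<lambda>y. \<integral>\<^sup>+w. ennreal (p (y - w)) \<partial>\<nu>)"
    unfolding \<nu>_def by (rule M.distributed_add_indep[OF indep X N])
  then have total: "(\<integral>\<^sup>+y. (\<integral>\<^sup>+w. ennreal (p (y - w)) \<partial>\<nu>) \<partial>lborel) \<noteq> \<infinity>"
    using finite_measure.emeasure_finite[OF M.distributed_finite_measure_density[OF sum], of UNIV]
    by (simp add: emeasure_density)
  have "integrable \<nu> (\<lambda>w. p (y - w))" for y
  proof (rule integrableI_nonneg)
    show "(\<lambda>w. p (y - w)) \<in> borel_measurable \<nu>" by measurable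
    show "AE w in \<nu>. 0 \<le> p (y - w)" using density_pos by (simp add: less_imp_le)
    show "(\<integral>\<^sup>+w. ennreal (p (y - w)) \<partial>\<nu>) < \<infinity>"
      by (rule nn_integral_translate_finite[OF sets_\<nu> total])
  qed
  then interpret log_lipschitz_mixture p C \<nu>
    using sets_\<nu> M.prob_space_distr[OF N] log_lipschitz_density_axioms
    by (intro log_lipschitz_mixture.intro log_lipschitz_mixture_axioms.intro) (simp_all add: \<nu>_def)
  show ?thesis
    using sum log_lipschitz_density_mixture by (auto simp: nn_integral_translate_eq_mixture)
qed

theorem lemma2:
  fixes M :: "'a measure" and X N :: "'a \<Rightarrow> real^'k"
    and p :: "real^'k \<Rightarrow> real" and Cov :: "real^'k^'k" and C :: real
  assumes "prob_space M"
    and "distributed M lborel X (\<lambda>x. ennreal (p x))"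
    and "\<forall>\<alpha>. p \<alpha> > 0"
    and "\<forall>\<alpha>. p differentiable (at \<alpha>)"
    and "gaussian_vec M N Cov"
    and "prob_space.indep_var M borel X borel N"
    and "\<forall>\<alpha>. norm (score p \<alpha>) \<le> C"
  shows "\<exists>q :: real^'k \<Rightarrow> real.
           distributed M lborel (\<lambda>\<omega>. X \<omega> + N \<omega>) (\<lambda>x. ennreal (q x)) \<and>
           (\<forall>\<alpha>. q \<alpha> > 0) \<and> (\<forall>\<alpha>. q differentiable (at \<alpha>)) \<and>
           (\<forall>\<alpha>. norm (score q \<alpha>) \<le> C)"
proof -
  interpret log_lipschitz_density p C
    using assms(3,4,7) by unfold_locales auto
  have "N \<in> borel_measurable M"
    using assms(5) by (simp add: gaussian_vec_def)
  then show ?thesis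
    using distributed_add_indep_log_lipschitz[OF assms(1,2) _ assms(6)]
    by (auto simp: log_lipschitz_density_def)
qed

end
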